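(* Let $\Gamma$ be an Arf numerical semigroup with conductor $c$, let $e'\in\Gamma\setminus\{0\}$, and let $a,b\in\mathbb Z$ with $a\ge2$ and $b\ge c$. Then \[ E\big(a\Gamma_{e'}\cup(a(b+e')+\mathbb N),2\big)=\min\{a e',\,E(a\Gamma\cup(ab+\mathbb N),2)+1\}. \] Furthermore, if $\Gamma$ has multiplicity sequence $(d_1,\dots,d_r)$, then \[ E(a\Gamma\cup(ab+\mathbb N),2)=\min\{ad_1,\,ad_2+1,\,\dots,\,ad_{r-1}+r-2,\,a+r-1,\,(b-c)+r\}. \]
   Context: A numerical semigroup is a subset $\Gamma\subseteq\mathbb N$ containing $0$, closed under addition, with finite complement; write $\Gamma=\{0=\rho_1<\rho_2<\cdots\}$, conductor $c=\rho_r$ (least $c$ with $c+\mathbb N\subseteq\Gamma$), genus $g=|\mathbb N\setminus\Gamma|$. $\Gamma$ is Arf if $\rho_i+\rho_j-\rho_k\in\Gamma$ for all $i\ge j\ge k$. Multiplicity sequence: $(d_1,\dots,d_r)$ with $d_i=\rho_{i+1}-\rho_i$. $\Gamma_{e'}=\{0\}\cup(e'+\Gamma)$; $aS=\{as:s\in S\}$; $ab+\mathbb N=\{ab+n:n\in\mathbb N\}$. For a numerical semigroup $S$ with conductor $c_S$ and genus $g_S$, let $D_S(x)=\{s\in S:x-s\in S\}$ and $\delta^2_S(m)=\min\{|D_S(m_1)\cup D_S(m_2)|: m\le m_1<m_2,\ m_i\in S\}$; the second Feng-Rao number $E(S,2)$ is the integer with $\delta^2_S(m)=m+1-2g_S+E(S,2)$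 for all $m\ge 2c_S-1$. *)

theory Defs
  imports Main "HOL-Library.Infinite_Set"
begin

definition numerical_semigroup :: "nat set \<Rightarrow> bool" where
  "numerical_semigroup S \<longleftrightarrow> 0 \<in> S \<and> (\<forall>x\<in>S. \<forall>y\<in>S. x + y \<in> S) \<and> finite (UNIV - S)"

definition conductor :: "nat set \<Rightarrow> nat" where
  "conductor S = (LEAST c. \<forall>n. c \<le> n \<longrightarrow> n \<in> S)"

definition genus :: "nat set \<Rightarrow> nat" where
  "genus S = card (UNIV - S)"

definition is_Arf :: "nat set \<Rightarrow> bool" where
  "is_Arf S \<longleftrightarrow> (\<forall>x\<in>S. \<forall>y\<in>S. \<forall>z\<in>S. x \<ge> y \<and> y \<ge> z \<longrightarrow> x + y - z \<in> S)"

text \<open>rho S i is the i-th element (1-indexed) of S: rho_1 = 0 < rho_2 < ...\<close>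
definition rho :: "nat set \<Rightarrow> nat \<Rightarrow> nat" where
  "rho S i = enumerate S (i - 1)"

definition multiplicity_sequence :: "nat set \<Rightarrow> nat \<Rightarrow> (nat \<Rightarrow> nat) \<Rightarrow> bool" where
  "multiplicity_sequence S r d \<longleftrightarrow> r \<ge> 1 \<and> rho S r = conductor S \<and>
     (\<forall>i\<in>{1..r}. d i = rho S (Suc i) - rho S i)"

definition shiftsg :: "nat set \<Rightarrow> nat \<Rightarrow> nat set" where
  "shiftsg S e = {0} \<union> ((\<lambda>s. e + s) ` S)"

definition scale :: "nat \<Rightarrow> nat set \<Rightarrow> nat set" where
  "scale a S = (\<lambda>s. a * s) ` S"

definition from_on :: "nat \<Rightarrow> nat set" where
  "from_on k = {n. k \<le> n}"

definition Dset :: "nat set \<Rightarrow> nat \<Rightarrow> nat set" where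
  "Dset S x = {s \<in> S. x \<ge> s \<and> x - s \<in> S}"

definition delta2 :: "nat set \<Rightarrow> nat \<Rightarrow> nat" where
  "delta2 S m = (LEAST k. \<exists>m1 m2. m \<le> m1 \<and> m1 < m2 \<and> m1 \<in> S \<and> m2 \<in> S \<and>
                     k = card (Dset S m1 \<union> Dset S m2))"

definition FengRao2 :: "nat set \<Rightarrow> int" where
  "FengRao2 S = (THE E. \<forall>m. int m \<ge> 2 * int (conductor S) - 1 \<longrightarrow>
       int (delta2 S m) = int m + 1 - 2 * int (genus S) + E)"

end

theory Submission
  imports Defs
begin

(*
  The second Feng-Rao number is a minimum over translations: for m \<ge> 2c - 1 the set
  D(m) \<union> D(m + k) misses exactly the gaps of S lying in k + S, so
  E(S,2) = min_{k \<ge> 1} (k + #((k + S) - S)).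
  For T = a\<Gamma> \<union> (ab + \<nat>) a translation by a multiple a j only sees the scaled copy of
  (j + \<Gamma>) - \<Gamma>, while for k not divisible by a every x \<in> \<Gamma> with x + k div a < b gives
  the gap k + a x, so k + #((k + T) - T) \<ge> #{x \<in> \<Gamma>. x < b} + 1, with equality for k = 1.
  Hence E(T,2) = min(#{x \<in> \<Gamma>. x < b} + 1, min_j (a j + #((j + \<Gamma>) - \<Gamma>))).
  Passing from \<Gamma> to \<Gamma>_e' adds the single gap j to (j + \<Gamma>_e') - \<Gamma>_e' for j \<notin> \<Gamma>_e',
  and no gap at all for j = e', which gives the first formula. For an Arf semigroup with
  multiplicity sequence d, a translation by j produces one gap above each element that is
  followed by a jump larger than j, and the Arf property shows that translating by d_i
  produces at most i - 1 gaps; this gives the second formula.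
*)

lemma numerical_semigroup_add:
  "numerical_semigroup S \<Longrightarrow> x \<in> S \<Longrightarrow> y \<in> S \<Longrightarrow> x + y \<in> S"
  unfolding numerical_semigroup_def by blast

lemma mem_if_conductor_le:
  assumes "numerical_semigroup S" "conductor S \<le> n"
  shows "n \<in> S"
proof -
  have "finite (UNIV - S)"
    using assms(1) unfolding numerical_semigroup_def by blast
  then obtain m where "\<forall>t\<in>UNIV - S. t \<le> m"
    using finite_nat_set_iff_bounded_le by blast
  then have "\<forall>n. Suc m \<le> n \<longrightarrow> n \<in> S" by force
  then have "\<forall>n. conductor S \<le> n \<longrightarrow> n \<in> S"
    unfolding conductor_def by (rule LeastI)
  with assms(2) show ?thesis by blast
qed

lemma gap_less_conductor: "numerical_semigroup S \<Longrightarrow> t \<notin> S \<Longrightarrow> t < conductor S"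
  using mem_if_conductor_le not_le by blast

lemma numerical_semigroup_infinite: "numerical_semigroup S \<Longrightarrow> infinite S"
  unfolding numerical_semigroup_def using infinite_UNIV_nat by (metis Diff_infinite_finite)

section \<open>The second Feng-Rao number via translated gaps\<close>

definition gaps_in_translate :: "nat set \<Rightarrow> nat \<Rightarrow> nat set" where
  "gaps_in_translate S k = (\<lambda>s. k + s) ` S - S"

lemma mem_gaps_in_translate:
  "t \<in> gaps_in_translate S k \<longleftrightarrow> t \<notin> S \<and> k \<le> t \<and> t - k \<in> S"
  unfolding gaps_in_translate_def by (auto intro: image_eqI[of _ _ "t - k"])

lemma finite_gaps_in_translate:
  "finite (UNIV - S) \<Longrightarrow> finite (gaps_in_translate S k)"
  unfolding gaps_in_translate_def by (rule finite_subset) auto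

lemma finite_Dset: "finite (Dset S x)"
  by (rule finite_subset[of _ "{..x}"]) (auto simp: Dset_def)

lemma card_Dset:
  assumes S: "numerical_semigroup S" and x: "2 * conductor S \<le> x + 1"
  shows "card (Dset S x) + 2 * genus S = x + 1"
proof -
  define G where "G = UNIV - S"
  define R where "R = (\<lambda>t. x - t) ` G"
  have G_less: "t < conductor S" if "t \<in> G" for t
    using that gap_less_conductor[OF S] unfolding G_def by blast
  have G_le: "t \<le> x" if "t \<in> G" for t
    using G_less[OF that] x by linarith
  have "finite G"
    using S unfolding G_def numerical_semigroup_def by blast
  have cover: "{..x} = Dset S x \<union> (G \<union> R)"
  proof (intro equalityI subsetI)
    fix s assume "s \<in> {..x}"
    then have "s \<in> Dset S x \<or> s \<in> G \<or> x - s \<in> G" "s = x - (x - s)"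
      unfolding Dset_def G_def by auto
    then show "s \<in> Dset S x \<union> (G \<union> R)"
      unfolding R_def by blast
  qed (use G_le in \<open>auto simp: Dset_def R_def\<close>)
  have "Dset S x \<inter> (G \<union> R) = {}"
  proof -
    have "x - t \<notin> Dset S x" if "t \<in> G" for t
      using that G_le[OF that] unfolding Dset_def G_def by auto
    then show ?thesis
      unfolding Dset_def G_def R_def by blast
  qed
  moreover have "G \<inter> R = {}"
  proof -
    have "x - t \<notin> G" if "t \<in> G" for t
      using G_less[of "x - t"] G_less[OF that] G_le[OF that] x by linarith
    then show ?thesis
      unfolding R_def by blast
  qed
  moreover have "card R = card G"
    unfolding R_def by (intro card_image inj_onI) (metis G_le diff_diff_cancel)
  ultimately have "card {..x} = card (Dset S x) + (card G + card G)"
    unfolding cover using \<open>finite G\<close> finite_Dset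
    by (simp add: card_Un_disjoint R_def)
  then show ?thesis
    unfolding genus_def G_def by simp
qed

lemma card_Dset_Un:
  assumes S: "numerical_semigroup S" and m1: "2 * conductor S \<le> m1 + 1" and "m1 < m2"
  shows "card (Dset S m1 \<union> Dset S m2) + 2 * genus S
           = m2 + 1 + card (gaps_in_translate S (m2 - m1))"
proof -
  define H where "H = gaps_in_translate S (m2 - m1)"
  have H_less: "t < conductor S" if "t \<in> H" for t
    using that gap_less_conductor[OF S] unfolding H_def mem_gaps_in_translate by blast
  have H_le: "t \<le> m2" if "t \<in> H" for t
    using H_less[OF that] m1 \<open>m1 < m2\<close> by linarith
  have "Dset S m1 - Dset S m2 = (\<lambda>t. m2 - t) ` H"
  proof (intro equalityI subsetI)
    fix s assume "s \<in> Dset S m1 - Dset S m2"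
    then have "m2 - s \<in> H" "s = m2 - (m2 - s)"
      using \<open>m1 < m2\<close> unfolding Dset_def H_def mem_gaps_in_translate by auto
    then show "s \<in> (\<lambda>t. m2 - t) ` H" by blast
  next
    fix s assume "s \<in> (\<lambda>t. m2 - t) ` H"
    then obtain t where t: "t \<in> H" "s = m2 - t" by blast
    with H_less[OF t(1)] H_le[OF t(1)] m1 \<open>m1 < m2\<close>
    have "conductor S \<le> s" "s \<le> m1" "m1 - s = t - (m2 - m1)" "m2 - s = t"
      unfolding H_def mem_gaps_in_translate by auto
    moreover from this(1) have "s \<in> S"
      by (rule mem_if_conductor_le[OF S])
    ultimately show "s \<in> Dset S m1 - Dset S m2"
      using t(1) unfolding Dset_def H_def mem_gaps_in_translate by auto
  qed
  moreover have "inj_on (\<lambda>t. m2 - t) H"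
    using H_le by (intro inj_onI) (metis diff_diff_cancel)
  ultimately have "card (Dset S m1 - Dset S m2) = card H"
    by (simp add: card_image)
  moreover have "card (Dset S m1 \<union> Dset S m2) = card (Dset S m2) + card (Dset S m1 - Dset S m2)"
    using card_Un_disjoint[of "Dset S m2" "Dset S m1 - Dset S m2"] finite_Dset
    by (simp add: Un_commute)
  moreover have "card (Dset S m2) + 2 * genus S = m2 + 1"
    using card_Dset[OF S] m1 \<open>m1 < m2\<close> by simp
  ultimately show ?thesis
    unfolding H_def by simp
qed

definition translate_gap_min :: "nat \<Rightarrow> nat set \<Rightarrow> nat" where
  "translate_gap_min a S = (INF k\<in>{1..}. a * k + card (gaps_in_translate S k))"

lemma translate_gap_min_le:
  "1 \<le> k \<Longrightarrow> translate_gap_min a S \<le> a * k + card (gaps_in_translate S k)"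
  unfolding translate_gap_min_def by (intro cINF_lower) auto

lemma le_translate_gap_min:
  "(\<And>k. 1 \<le> k \<Longrightarrow> m \<le> a * k + card (gaps_in_translate S k)) \<Longrightarrow> m \<le> translate_gap_min a S"
  unfolding translate_gap_min_def by (intro cINF_greatest) auto

lemma translate_gap_min_attained:
  obtains k where "1 \<le> k" "translate_gap_min a S = a * k + card (gaps_in_translate S k)"
proof -
  have "translate_gap_min a S \<in> (\<lambda>k. a * k + card (gaps_in_translate S k)) ` {1..}"
    unfolding translate_gap_min_def by (intro Inf_nat_def1) auto
  then show ?thesis
    using that by auto
qed

lemma delta2_eq_translate_gap_min:
  assumes S: "numerical_semigroup S" and m: "2 * conductor S \<le> m + 1"
  shows "delta2 S m + 2 * genus S = m + 1 + translate_gap_min 1 S"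
proof -
  obtain k where k: "1 \<le> k" "translate_gap_min 1 S = k + card (gaps_in_translate S k)"
    using translate_gap_min_attained by (metis mult_1)
  have "m \<in> S" "m + k \<in> S"
    using mem_if_conductor_le[OF S] m by (cases "conductor S", auto)+
  define v where "v = card (Dset S m \<union> Dset S (m + k))"
  have v: "v + 2 * genus S = m + 1 + translate_gap_min 1 S"
    using card_Dset_Un[OF S m, of "m + k"] k unfolding v_def by simp
  have "delta2 S m = v"
    unfolding delta2_def
  proof (rule Least_equality)
    show "\<exists>m1 m2. m \<le> m1 \<and> m1 < m2 \<and> m1 \<in> S \<and> m2 \<in> S \<and> v = card (Dset S m1 \<union> Dset S m2)"
      using \<open>m \<in> S\<close> \<open>m + k \<in> S\<close> k unfolding v_def
      by (intro exI[of _ m] exI[of _ "m + k"]) auto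
  next
    fix y
    assume "\<exists>m1 m2. m \<le> m1 \<and> m1 < m2 \<and> m1 \<in> S \<and> m2 \<in> S \<and> y = card (Dset S m1 \<union> Dset S m2)"
    then obtain m1 m2 where "m \<le> m1" "m1 < m2" "y = card (Dset S m1 \<union> Dset S m2)"
      by blast
    moreover have "translate_gap_min 1 S \<le> (m2 - m1) + card (gaps_in_translate S (m2 - m1))"
      using translate_gap_min_le[of "m2 - m1" 1 S] \<open>m1 < m2\<close> by simp
    ultimately show "v \<le> y"
      using card_Dset_Un[OF S _ \<open>m1 < m2\<close>] m v by fastforce
  qed
  with v show ?thesis by simp
qed

theorem FengRao2_eq_translate_gap_min:
  assumes S: "numerical_semigroup S"
  shows "FengRao2 S = int (translate_gap_min 1 S)"
  unfolding FengRao2_def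
proof (rule the_equality)
  show "\<forall>m. 2 * int (conductor S) - 1 \<le> int m \<longrightarrow>
      int (delta2 S m) = int m + 1 - 2 * int (genus S) + int (translate_gap_min 1 S)"
  proof (intro allI impI)
    fix m
    assume "2 * int (conductor S) - 1 \<le> int m"
    then have "2 * conductor S \<le> m + 1"
      by linarith
    from delta2_eq_translate_gap_min[OF S this]
    show "int (delta2 S m) = int m + 1 - 2 * int (genus S) + int (translate_gap_min 1 S)"
      by linarith
  qed
next
  fix E
  assume "\<forall>m. 2 * int (conductor S) - 1 \<le> int m \<longrightarrow>
      int (delta2 S m) = int m + 1 - 2 * int (genus S) + E"
  then have "int (delta2 S (2 * conductor S)) = int (2 * conductor S) + 1 - 2 * int (genus S) + E"
    by simp
  moreover have "delta2 S (2 * conductor S) + 2 * genus S = 2 * conductor S + 1 + translate_gap_min 1 S"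
    using delta2_eq_translate_gap_min[OF S] by simp
  ultimately show "E = int (translate_gap_min 1 S)"
    by linarith
qed

section \<open>Scaled semigroups\<close>

lemma mem_scale_mult: "0 < a \<Longrightarrow> a * x \<in> scale a G \<longleftrightarrow> x \<in> G"
  unfolding scale_def by auto

lemma finite_gaps_scale_Un_from_on: "finite (UNIV - (scale a G \<union> from_on (a * b)))"
  by (rule finite_subset[of _ "{..<a * b}"]) (auto simp: from_on_def)

lemma numerical_semigroup_scale_Un_from_on:
  assumes "numerical_semigroup G"
  shows "numerical_semigroup (scale a G \<union> from_on (a * b))"
  unfolding numerical_semigroup_def
proof (intro conjI ballI finite_gaps_scale_Un_from_on)
  show "0 \<in> scale a G \<union> from_on (a * b)"
    using assms unfolding numerical_semigroup_def scale_def by auto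
  show "x + y \<in> scale a G \<union> from_on (a * b)"
    if "x \<in> scale a G \<union> from_on (a * b)" "y \<in> scale a G \<union> from_on (a * b)" for x y
    using that numerical_semigroup_add[OF assms] unfolding scale_def from_on_def
    by (auto simp: distrib_left[symmetric])
qed

lemma gaps_in_translate_scale_mult:
  assumes "0 < a" and G_less: "\<And>t. t \<notin> G \<Longrightarrow> t < b"
  shows "gaps_in_translate (scale a G \<union> from_on (a * b)) (a * j) = scale a (gaps_in_translate G j)"
proof (intro equalityI subsetI)
  fix t
  assume "t \<in> gaps_in_translate (scale a G \<union> from_on (a * b)) (a * j)"
  then have t: "t < a * b" "t \<notin> scale a G" "a * j \<le> t" "t - a * j \<in> scale a G"
    unfolding mem_gaps_in_translate from_on_def by auto
  then obtain x where x: "x \<in> G" "t = a * (x + j)"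
    unfolding scale_def by (auto simp: distrib_left)
  with t \<open>0 < a\<close> have "x + j \<notin> G"
    by (auto simp: mem_scale_mult)
  with x show "t \<in> scale a (gaps_in_translate G j)"
    unfolding scale_def by (intro image_eqI[of _ _ "x + j"]) (auto simp: mem_gaps_in_translate)
next
  fix t
  assume "t \<in> scale a (gaps_in_translate G j)"
  then obtain y where y: "t = a * y" "y \<notin> G" "j \<le> y" "y - j \<in> G"
    using mem_gaps_in_translate unfolding scale_def by blast
  moreover have "a * y < a * b"
    using G_less[OF y(2)] \<open>0 < a\<close> by simp
  moreover have "a * y - a * j = a * (y - j)"
    by (simp add: diff_mult_distrib2)
  ultimately show "t \<in> gaps_in_translate (scale a G \<union> from_on (a * b)) (a * j)"
    using \<open>0 < a\<close> unfolding mem_gaps_in_translate from_on_def by (auto simp: mem_scale_mult)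
qed

lemma gaps_in_translate_scale_one:
  assumes "2 \<le> a"
  shows "gaps_in_translate (scale a G \<union> from_on (a * b)) 1 = (\<lambda>x. a * x + 1) ` {x\<in>G. x < b}"
proof (intro equalityI subsetI)
  fix t
  assume "t \<in> gaps_in_translate (scale a G \<union> from_on (a * b)) 1"
  then have "t - 1 \<in> scale a G" "t - 1 < a * b" "1 \<le> t"
    unfolding mem_gaps_in_translate from_on_def by auto
  then obtain x where "x \<in> G" "t = a * x + 1" "x < b"
    unfolding scale_def by auto
  then show "t \<in> (\<lambda>x. a * x + 1) ` {x\<in>G. x < b}"
    by blast
next
  fix t
  assume "t \<in> (\<lambda>x. a * x + 1) ` {x\<in>G. x < b}"
  then obtain x where x: "x \<in> G" "x < b" "t = a * x + 1"
    by blast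
  have "a * (x + 1) \<le> a * b"
    using x(2) by (intro mult_le_mono2) simp
  then have "a * x + 1 < a * b"
    using assms by simp
  moreover have "\<not> a dvd a * x + 1"
    using assms dvd_add_right_iff[of a "a * x" 1] by auto
  then have "a * x + 1 \<notin> scale a G"
    unfolding scale_def by auto
  ultimately show "t \<in> gaps_in_translate (scale a G \<union> from_on (a * b)) 1"
    using x unfolding mem_gaps_in_translate from_on_def scale_def by auto
qed

lemma card_less_le_gaps_in_translate_scale_not_dvd:
  assumes "0 < a" "\<not> a dvd k"
  shows "card {x\<in>G. x < b} + 1 \<le> k + card (gaps_in_translate (scale a G \<union> from_on (a * b)) k)"
proof -
  define q where "q = k div a"
  define \<rho> where "\<rho> = k mod a"
  have k: "k = a * q + \<rho>" and \<rho>: "0 < \<rho>" "\<rho> < a"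
    using assms unfolding q_def \<rho>_def by (auto simp: dvd_eq_mod_eq_0)
  have "(\<lambda>x. k + a * x) ` {x\<in>G. x + q < b} \<subseteq> gaps_in_translate (scale a G \<union> from_on (a * b)) k"
  proof
    fix t assume "t \<in> (\<lambda>x. k + a * x) ` {x\<in>G. x + q < b}"
    then obtain x where x: "x \<in> G" "x + q < b" "t = k + a * x" by blast
    have "a * (x + q + 1) \<le> a * b"
      using x(2) by (intro mult_le_mono2) simp
    then have "t < a * b"
      using x(3) k \<rho> by (simp add: algebra_simps)
    moreover have "t = a * (q + x) + \<rho>"
      using x(3) k by (simp add: algebra_simps)
    then have "\<not> a dvd t"
      using \<rho> by (simp add: dvd_add_right_iff nat_dvd_not_less)
    then have "t \<notin> scale a G"
      unfolding scale_def by auto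
    moreover have "t - k \<in> scale a G"
      using x unfolding scale_def by auto
    ultimately show "t \<in> gaps_in_translate (scale a G \<union> from_on (a * b)) k"
      using x(3) unfolding mem_gaps_in_translate from_on_def by auto
  qed
  then have "card {x\<in>G. x + q < b} \<le> card (gaps_in_translate (scale a G \<union> from_on (a * b)) k)"
    using \<open>0 < a\<close> by (intro card_inj_on_le finite_gaps_in_translate finite_gaps_scale_Un_from_on)
      (auto simp: inj_on_def)
  moreover have "card {x\<in>G. x < b} \<le> card ({x\<in>G. x + q < b} \<union> {b - q..<b})"
    by (intro card_mono) (auto intro: finite_subset[of _ "{..<b}"])
  moreover have "card ({x\<in>G. x + q < b} \<union> {b - q..<b}) \<le> card {x\<in>G. x + q < b} + q"
    using card_Un_le[of "{x\<in>G. x + q < b}" "{b - q..<b}"] by simp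
  moreover have "q \<le> a * q"
    using \<open>0 < a\<close> by simp
  ultimately show ?thesis
    using k \<rho> by linarith
qed

lemma translate_gap_min_scale:
  assumes a: "2 \<le> a" and G: "numerical_semigroup G" and b: "conductor G \<le> b"
  shows "translate_gap_min 1 (scale a G \<union> from_on (a * b))
           = min (card {x\<in>G. x < b} + 1) (translate_gap_min a G)"
    (is "translate_gap_min 1 ?T = min ?N ?W")
proof -
  have "0 < a"
    using a by simp
  have "gaps_in_translate ?T (a * j) = (\<lambda>x. a * x) ` gaps_in_translate G j" for j
    using gaps_in_translate_scale_mult[OF \<open>0 < a\<close>] gap_less_conductor[OF G] b
    unfolding scale_def by (meson le_less_trans not_le)
  moreover have "inj (\<lambda>x. a * x)"
    using \<open>0 < a\<close> by (simp add: inj_on_def)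
  ultimately have card_mult: "card (gaps_in_translate ?T (a * j)) = card (gaps_in_translate G j)" for j
    by (simp add: card_image inj_on_subset)
  have "card (gaps_in_translate ?T 1) \<le> card {x\<in>G. x < b}"
    unfolding gaps_in_translate_scale_one[OF a] by (rule card_image_le) simp
  then have "translate_gap_min 1 ?T \<le> ?N"
    using translate_gap_min_le[of 1 1 ?T] by simp
  moreover have "translate_gap_min 1 ?T \<le> ?W"
  proof (rule le_translate_gap_min)
    fix j :: nat
    assume "1 \<le> j"
    then show "translate_gap_min 1 ?T \<le> a * j + card (gaps_in_translate G j)"
      using translate_gap_min_le[of "a * j" 1 ?T] \<open>0 < a\<close> card_mult by simp
  qed
  moreover have "min ?N ?W \<le> translate_gap_min 1 ?T"
  proof (rule le_translate_gap_min)
    fix k :: nat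
    assume "1 \<le> k"
    show "min ?N ?W \<le> 1 * k + card (gaps_in_translate ?T k)"
    proof (cases "a dvd k")
      case True
      then obtain j where "k = a * j"
        by (rule dvdE)
      moreover from this \<open>1 \<le> k\<close> have "1 \<le> j"
        by (cases j) auto
      ultimately show ?thesis
        using translate_gap_min_le[of j a G] card_mult[of j] by (simp add: min.coboundedI2)
    next
      case False
      with \<open>0 < a\<close> show ?thesis
        using card_less_le_gaps_in_translate_scale_not_dvd[of a k G b] by (simp add: min.coboundedI1)
    qed
  qed
  ultimately show ?thesis
    by simp
qed

section \<open>Shifted semigroups\<close>

lemma mem_shiftsg: "x \<in> shiftsg G e \<longleftrightarrow> x = 0 \<or> (e \<le> x \<and> x - e \<in> G)"
  unfolding shiftsg_def by (auto intro: image_eqI[of _ _ "x - e"])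

lemma conductor_shiftsg_le:
  assumes "numerical_semigroup G"
  shows "conductor (shiftsg G e) \<le> conductor G + e"
  unfolding conductor_def[of "shiftsg G e"]
  by (rule Least_le) (auto simp: mem_shiftsg intro: mem_if_conductor_le[OF assms])

lemma numerical_semigroup_shiftsg:
  assumes G: "numerical_semigroup G" and "e \<in> G"
  shows "numerical_semigroup (shiftsg G e)"
  unfolding numerical_semigroup_def
proof (intro conjI ballI)
  show "0 \<in> shiftsg G e"
    by (simp add: mem_shiftsg)
  show "x + y \<in> shiftsg G e" if "x \<in> shiftsg G e" "y \<in> shiftsg G e" for x y
  proof -
    have "x - e + (y - e + e) \<in> G" if "x - e \<in> G" "y - e \<in> G"
      using that \<open>e \<in> G\<close> numerical_semigroup_add[OF G] by simp
    with \<open>x \<in> shiftsg G e\<close> \<open>y \<in> shiftsg G e\<close> show ?thesis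
      unfolding mem_shiftsg by (auto simp: add.assoc)
  qed
  have "t < conductor G + e" if "t \<notin> shiftsg G e" for t
  proof (rule ccontr)
    assume "\<not> t < conductor G + e"
    then have "e \<le> t" "t - e \<in> G"
      using mem_if_conductor_le[OF G, of "t - e"] by auto
    with that show False
      by (simp add: mem_shiftsg)
  qed
  then have "UNIV - shiftsg G e \<subseteq> {..<conductor G + e}"
    by auto
  then show "finite (UNIV - shiftsg G e)"
    by (rule finite_subset) simp
qed

lemma card_shiftsg_less:
  assumes "e \<noteq> 0"
  shows "card {x\<in>shiftsg G e. x < b + e} = card {x\<in>G. x < b} + 1"
proof -
  have "{x\<in>shiftsg G e. x < b + e} = insert 0 ((\<lambda>x. e + x) ` {x\<in>G. x < b})"
    using assms by (auto simp: mem_shiftsg shiftsg_def)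
  moreover have "0 \<notin> (\<lambda>x. e + x) ` {x\<in>G. x < b}"
    using assms by auto
  moreover have "finite {x\<in>G. x < b}"
    by (rule finite_subset[of _ "{..<b}"]) auto
  ultimately show ?thesis
    by (simp add: card_image)
qed

lemma gaps_in_translate_shiftsg:
  assumes "e \<noteq> 0" "j \<notin> shiftsg G e"
  shows "gaps_in_translate (shiftsg G e) j = insert j ((\<lambda>t. e + t) ` gaps_in_translate G j)"
proof (intro equalityI subsetI)
  fix t
  assume t: "t \<in> gaps_in_translate (shiftsg G e) j"
  show "t \<in> insert j ((\<lambda>t. e + t) ` gaps_in_translate G j)"
  proof (cases "t = j")
    case False
    with t have "t - e \<in> gaps_in_translate G j" "t = e + (t - e)"
      unfolding mem_gaps_in_translate mem_shiftsg by (auto simp: add.commute)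
    then show ?thesis
      by blast
  qed simp
next
  fix t
  assume "t \<in> insert j ((\<lambda>t. e + t) ` gaps_in_translate G j)"
  then consider "t = j" | u where "u \<in> gaps_in_translate G j" "t = e + u"
    by blast
  then show "t \<in> gaps_in_translate (shiftsg G e) j"
  proof cases
    case 1
    with assms show ?thesis
      by (simp add: mem_gaps_in_translate mem_shiftsg)
  next
    case (2 u)
    then have "u \<notin> G" "j \<le> u" "u - j \<in> G"
      by (simp_all add: mem_gaps_in_translate)
    with 2 \<open>e \<noteq> 0\<close> show ?thesis
      by (auto simp: mem_gaps_in_translate mem_shiftsg)
  qed
qed

lemma card_gaps_in_translate_shiftsg:
  assumes "finite (UNIV - G)" "e \<noteq> 0" "j \<notin> shiftsg G e"
  shows "card (gaps_in_translate (shiftsg G e) j) = card (gaps_in_translate G j) + 1"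
proof -
  have "j \<notin> (\<lambda>t. e + t) ` gaps_in_translate G j"
    using \<open>e \<noteq> 0\<close> by (auto simp: mem_gaps_in_translate)
  then show ?thesis
    unfolding gaps_in_translate_shiftsg[OF assms(2,3)]
    using finite_gaps_in_translate[OF assms(1)] by (simp add: card_image)
qed

lemma gaps_in_translate_shiftsg_self:
  assumes "numerical_semigroup G" "e \<in> G"
  shows "gaps_in_translate (shiftsg G e) e = {}"
proof -
  have "t \<in> shiftsg G e" if "e \<le> t" "t - e \<in> shiftsg G e" for t
  proof (cases "t = e")
    case True
    with assms(1) show ?thesis
      by (simp add: mem_shiftsg numerical_semigroup_def)
  next
    case False
    with that have "e \<le> t - e" "t - e - e \<in> G"
      by (auto simp: mem_shiftsg)
    moreover from this(2) have "e + (t - e - e) \<in> G"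
      by (rule numerical_semigroup_add[OF assms])
    ultimately show ?thesis
      using that(1) by (simp add: mem_shiftsg)
  qed
  then show ?thesis
    by (auto simp: mem_gaps_in_translate)
qed

lemma translate_gap_min_shiftsg:
  assumes G: "numerical_semigroup G" and e: "e \<in> G" "e \<noteq> 0"
  shows "translate_gap_min a (shiftsg G e) = min (a * e) (translate_gap_min a G + 1)"
    (is "?W' = min (a * e) (?W + 1)")
proof -
  have fin: "finite (UNIV - G)"
    using G unfolding numerical_semigroup_def by blast
  have "?W' \<le> a * e"
    using translate_gap_min_le[of e a "shiftsg G e"] e gaps_in_translate_shiftsg_self[OF G e(1)]
    by simp
  moreover have "?W' \<le> ?W + 1"
  proof -
    obtain j where j: "1 \<le> j" "?W = a * j + card (gaps_in_translate G j)"
      by (rule translate_gap_min_attained)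
    show ?thesis
    proof (cases "j \<in> shiftsg G e")
      case True
      then have "a * e \<le> a * j"
        using j(1) by (simp add: mem_shiftsg)
      with j \<open>?W' \<le> a * e\<close> show ?thesis
        by linarith
    next
      case False
      then show ?thesis
        using translate_gap_min_le[of j a "shiftsg G e"] j
          card_gaps_in_translate_shiftsg[OF fin e(2) False] by simp
    qed
  qed
  moreover have "min (a * e) (?W + 1) \<le> ?W'"
  proof (rule le_translate_gap_min)
    fix j :: nat
    assume "1 \<le> j"
    show "min (a * e) (?W + 1) \<le> a * j + card (gaps_in_translate (shiftsg G e) j)"
    proof (cases "j \<in> shiftsg G e")
      case True
      then have "e \<le> j"
        using \<open>1 \<le> j\<close> by (simp add: mem_shiftsg)
      then have "a * e \<le> a * j + card (gaps_in_translate (shiftsg G e) j)"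
        by (metis mult_le_mono2 trans_le_add1)
      then show ?thesis
        by (rule min.coboundedI1)
    next
      case False
      then show ?thesis
        using translate_gap_min_le[of j a G] \<open>1 \<le> j\<close>
          card_gaps_in_translate_shiftsg[OF fin e(2) False] by simp
    qed
  qed
  ultimately show ?thesis
    by simp
qed

theorem FengRao2_scale_shiftsg:
  assumes G: "numerical_semigroup G" and e: "e \<in> G" "e \<noteq> 0"
    and a: "2 \<le> a" and b: "conductor G \<le> b"
  shows "FengRao2 (scale a (shiftsg G e) \<union> from_on (a * (b + e))) =
           min (int (a * e)) (FengRao2 (scale a G \<union> from_on (a * b)) + 1)"
proof -
  define N where "N = card {x\<in>G. x < b} + 1"
  define W where "W = translate_gap_min a G"
  have "numerical_semigroup (shiftsg G e)"
    by (rule numerical_semigroup_shiftsg[OF G e(1)])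
  moreover have "conductor (shiftsg G e) \<le> b + e"
    using conductor_shiftsg_le[OF G, of e] b by simp
  ultimately have "FengRao2 (scale a (shiftsg G e) \<union> from_on (a * (b + e)))
      = int (min (N + 1) (min (a * e) (W + 1)))"
    using FengRao2_eq_translate_gap_min[OF numerical_semigroup_scale_Un_from_on]
      translate_gap_min_scale[OF a] card_shiftsg_less[OF e(2)] translate_gap_min_shiftsg[OF G e]
    unfolding N_def W_def by simp
  moreover have "FengRao2 (scale a G \<union> from_on (a * b)) = int (min N W)"
    using FengRao2_eq_translate_gap_min[OF numerical_semigroup_scale_Un_from_on[OF G]]
      translate_gap_min_scale[OF a G b]
    unfolding N_def W_def by simp
  moreover have "min (N + 1) (min (a * e) (W + 1)) = min (a * e) (min N W + 1)"
    by (simp add: min_def)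
  ultimately show ?thesis
    by (simp only:) (simp add: of_nat_min add.commute)
qed

section \<open>Arf semigroups\<close>

lemma card_less_enumerate:
  fixes S :: "nat set"
  assumes "infinite S"
  shows "card {x\<in>S. x < enumerate S n} = n"
proof -
  have "{x\<in>S. x < enumerate S n} = enumerate S ` {..<n}"
  proof (intro equalityI subsetI)
    fix x
    assume x: "x \<in> {x\<in>S. x < enumerate S n}"
    then obtain m where "enumerate S m = x"
      using enumerate_Ex[OF assms] by blast
    with x assms show "x \<in> enumerate S ` {..<n}"
      by auto
  qed (use assms enumerate_in_set in auto)
  then show ?thesis
    using card_image[OF inj_on_subset[OF inj_enumerate[OF assms] subset_UNIV]] by simp
qed

lemma not_mem_between_enumerate:
  fixes S :: "nat set"
  assumes "infinite S" "enumerate S n < x" "x < enumerate S (Suc n)"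
  shows "x \<notin> S"
  using assms enumerate_Ex[OF assms(1)] by (metis enumerate_mono_iff less_Suc_eq_le not_le)

lemma card_gaps_in_translate_ge:
  fixes S :: "nat set"
  assumes "infinite S" "finite (UNIV - S)" "1 \<le> j"
    and steps: "\<And>n. n < m \<Longrightarrow> enumerate S n + j < enumerate S (Suc n)"
  shows "m \<le> card (gaps_in_translate S j)"
proof -
  have "enumerate S n + j \<in> gaps_in_translate S j" if "n < m" for n
    using not_mem_between_enumerate[OF assms(1), of n "enumerate S n + j"] steps[OF that]
      \<open>1 \<le> j\<close> enumerate_in_set[OF assms(1)]
    by (simp add: mem_gaps_in_translate)
  then have "(\<lambda>n. enumerate S n + j) ` {..<m} \<subseteq> gaps_in_translate S j"
    by auto
  moreover have "inj_on (\<lambda>n. enumerate S n + j) {..<m}"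
    using inj_enumerate[OF assms(1)] by (auto simp: inj_on_def)
  ultimately show ?thesis
    using card_inj_on_le[OF _ _ finite_gaps_in_translate[OF assms(2)]] by fastforce
qed

lemma card_gaps_in_translate_one_le:
  assumes "numerical_semigroup S"
  shows "card (gaps_in_translate S 1) \<le> card {x\<in>S. x < conductor S}"
proof (rule card_inj_on_le[of "\<lambda>t. t - 1"])
  show "inj_on (\<lambda>t. t - 1) (gaps_in_translate S 1)"
    by (auto simp: inj_on_def mem_gaps_in_translate)
  show "(\<lambda>t. t - 1) ` gaps_in_translate S 1 \<subseteq> {x\<in>S. x < conductor S}"
    using gap_less_conductor[OF assms] by (fastforce simp: mem_gaps_in_translate)
qed simp

lemma card_gaps_in_translate_Arf_le:
  assumes S: "numerical_semigroup S" and "is_Arf S"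
  shows "card (gaps_in_translate S (enumerate S (Suc n) - enumerate S n)) \<le> n"
proof -
  define e where "e = enumerate S"
  define d where "d = e (Suc n) - e n"
  have inf: "infinite S"
    by (rule numerical_semigroup_infinite[OF S])
  have e: "e n \<in> S" "e (Suc n) \<in> S" "e n < e (Suc n)"
    unfolding e_def using inf by (auto simp: enumerate_in_set)
  \<comment> \<open>a gap t = x + d forces x < e n: x = e n would give t = e (Suc n), and x \<ge> e (Suc n)
    would put t = x + e (Suc n) - e n in S by the Arf property\<close>
  have "gaps_in_translate S d \<subseteq> (\<lambda>x. x + d) ` {x\<in>S. x < e n}"
  proof
    fix t
    assume t: "t \<in> gaps_in_translate S d"
    define x where "x = t - d"
    have x: "x \<in> S" "t \<notin> S" "t = x + d"
      using t unfolding x_def mem_gaps_in_translate by auto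
    have "x < e n"
    proof (rule ccontr)
      assume "\<not> x < e n"
      then consider "x = e n" | "e (Suc n) \<le> x"
        using not_mem_between_enumerate[OF inf, of n x] x(1) unfolding e_def by force
      then show False
      proof cases
        case 1
        then show False
          using x e unfolding d_def by simp
      next
        case 2
        then have "x + e (Suc n) - e n \<in> S"
          using \<open>is_Arf S\<close> x(1) e unfolding is_Arf_def by auto
        then show False
          using x e unfolding d_def by simp
      qed
    qed
    with x show "t \<in> (\<lambda>x. x + d) ` {x\<in>S. x < e n}"
      by blast
  qed
  then have "card (gaps_in_translate S d) \<le> card ((\<lambda>x. x + d) ` {x\<in>S. x < e n})"
    by (intro card_mono) simp_all
  also have "\<dots> \<le> card {x\<in>S. x < e n}"
    by (rule card_image_le) simp
  finally show ?thesis
    unfolding d_def e_def card_less_enumerate[OF inf] .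
qed

lemma card_less_conductor_multiplicity_sequence:
  assumes "numerical_semigroup S" "multiplicity_sequence S r d"
  shows "card {x\<in>S. x < conductor S} = r - 1"
  using assms card_less_enumerate[OF numerical_semigroup_infinite, of S "r - 1"]
  unfolding multiplicity_sequence_def rho_def by simp

lemma multiplicity_sequence_Suc:
  "multiplicity_sequence S r d \<Longrightarrow> n < r \<Longrightarrow> d (Suc n) = enumerate S (Suc n) - enumerate S n"
  unfolding multiplicity_sequence_def rho_def by auto

lemma Min_multiplicity_sequence_le_translate_gap_min:
  assumes S: "numerical_semigroup S" and ms: "multiplicity_sequence S r d"
  shows "Min ((\<lambda>i. a * d i + i - 1) ` {1..<r} \<union> {a + r - 1}) \<le> translate_gap_min a S"
    (is "Min ?M \<le> _")
proof (rule le_translate_gap_min)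
  fix j :: nat
  assume "1 \<le> j"
  have inf: "infinite S" and fin: "finite (UNIV - S)"
    using S numerical_semigroup_infinite unfolding numerical_semigroup_def by blast+
  have "1 \<le> r"
    using ms unfolding multiplicity_sequence_def by simp
  define I where "I = {i\<in>{1..<r}. d i \<le> j}"
  \<comment> \<open>if d i' > j for all i' < i, each of the first i - 1 elements e n of S yields the gap e n + j\<close>
  have card_ge: "i - 1 \<le> card (gaps_in_translate S j)"
    if "i \<le> r" "\<And>i'. i' \<in> I \<Longrightarrow> i \<le> i'" for i
  proof (rule card_gaps_in_translate_ge[OF inf fin \<open>1 \<le> j\<close>])
    fix n
    assume "n < i - 1"
    then have "Suc n \<notin> I" "Suc n \<in> {1..<r}"
      using that(1) that(2)[of "Suc n"] by auto
    then show "enumerate S n + j < enumerate S (Suc n)"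
      using multiplicity_sequence_Suc[OF ms, of n] enumerate_step[OF inf, of n]
      unfolding I_def by auto
  qed
  show "Min ?M \<le> a * j + card (gaps_in_translate S j)"
  proof (cases "I = {}")
    case True
    then have "r - 1 \<le> card (gaps_in_translate S j)"
      by (intro card_ge) auto
    moreover have "a \<le> a * j"
      using \<open>1 \<le> j\<close> by simp
    moreover have "Min ?M \<le> a + r - 1"
      by (intro Min_le) auto
    ultimately show ?thesis
      using \<open>1 \<le> r\<close> by linarith
  next
    case False
    define i where "i = Min I"
    have "finite I"
      unfolding I_def by simp
    then have "i \<in> I" "\<And>i'. i' \<in> I \<Longrightarrow> i \<le> i'"
      unfolding i_def using False by (auto intro: Min_in Min_le)
    then have "i \<in> {1..<r}" "a * d i \<le> a * j" "i - 1 \<le> card (gaps_in_translate S j)"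
      using card_ge[of i] unfolding I_def by auto
    moreover have "Min ?M \<le> a * d i + i - 1"
      using \<open>i \<in> {1..<r}\<close> by (intro Min_le) auto
    ultimately show ?thesis
      by linarith
  qed
qed

lemma translate_gap_min_Arf_le:
  assumes S: "numerical_semigroup S" and Arf: "is_Arf S" and ms: "multiplicity_sequence S r d"
    and m: "m \<in> (\<lambda>i. a * d i + i - 1) ` {1..<r} \<union> {a + r - 1}"
  shows "translate_gap_min a S \<le> m"
proof -
  consider i where "i \<in> {1..<r}" "m = a * d i + i - 1" | "m = a + r - 1"
    using m by blast
  then show ?thesis
  proof cases
    case (1 i)
    define n where "n = i - 1"
    have n: "i = Suc n" "d i = enumerate S (Suc n) - enumerate S n"
      using 1(1) multiplicity_sequence_Suc[OF ms, of n] unfolding n_def by auto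
    have "card (gaps_in_translate S (d i)) \<le> n"
      using card_gaps_in_translate_Arf_le[OF S Arf, of n] n by simp
    moreover have "1 \<le> d i"
      using enumerate_step[OF numerical_semigroup_infinite[OF S], of n] n by simp
    ultimately show ?thesis
      using translate_gap_min_le[of "d i" a S] 1 n by simp
  next
    case 2
    have "card (gaps_in_translate S 1) \<le> r - 1"
      using card_gaps_in_translate_one_le[OF S] card_less_conductor_multiplicity_sequence[OF S ms]
      by simp
    moreover have "1 \<le> r"
      using ms unfolding multiplicity_sequence_def by simp
    ultimately show ?thesis
      using translate_gap_min_le[of 1 a S] 2 by simp
  qed
qed

lemma translate_gap_min_Arf:
  assumes "numerical_semigroup S" "is_Arf S" "multiplicity_sequence S r d"
  shows "translate_gap_min a S = Min ((\<lambda>i. a * d i + i - 1) ` {1..<r} \<union> {a + r - 1})"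
proof (rule antisym)
  show "translate_gap_min a S \<le> Min ((\<lambda>i. a * d i + i - 1) ` {1..<r} \<union> {a + r - 1})"
    by (intro translate_gap_min_Arf_le[OF assms] Min_in) auto
  show "Min ((\<lambda>i. a * d i + i - 1) ` {1..<r} \<union> {a + r - 1}) \<le> translate_gap_min a S"
    by (rule Min_multiplicity_sequence_le_translate_gap_min[OF assms(1,3)])
qed

lemma card_less_multiplicity_sequence:
  assumes S: "numerical_semigroup S" and ms: "multiplicity_sequence S r d" and b: "conductor S \<le> b"
  shows "card {x\<in>S. x < b} + 1 = b - conductor S + r"
proof -
  have "{x\<in>S. x < b} = {x\<in>S. x < conductor S} \<union> {conductor S..<b}"
    using mem_if_conductor_le[OF S] b by auto
  moreover have "card ({x\<in>S. x < conductor S} \<union> {conductor S..<b})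
      = card {x\<in>S. x < conductor S} + card {conductor S..<b}"
    by (rule card_Un_disjoint) (auto intro: finite_subset[of _ "{..<conductor S}"])
  ultimately have "card {x\<in>S. x < b} = card {x\<in>S. x < conductor S} + card {conductor S..<b}"
    by simp
  moreover have "1 \<le> r"
    using ms unfolding multiplicity_sequence_def by simp
  ultimately show ?thesis
    using card_less_conductor_multiplicity_sequence[OF S ms] b
    unfolding card_atLeastLessThan by arith
qed

theorem FengRao2_scale_Arf:
  assumes S: "numerical_semigroup S" and Arf: "is_Arf S" and ms: "multiplicity_sequence S r d"
    and a: "2 \<le> a" and b: "conductor S \<le> b"
  shows "FengRao2 (scale a S \<union> from_on (a * b)) =
           Min ({int (a * d i) + int i - 1 | i. i \<in> {1..<r}} \<union>
                {int a + int r - 1, (int b - int (conductor S)) + int r})"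
proof -
  define N where "N = b - conductor S + r"
  define M where "M = (\<lambda>i. a * d i + i - 1) ` {1..<r} \<union> {a + r - 1}"
  have "1 \<le> r"
    using ms unfolding multiplicity_sequence_def by simp
  have "FengRao2 (scale a S \<union> from_on (a * b)) = int (min N (Min M))"
    using FengRao2_eq_translate_gap_min[OF numerical_semigroup_scale_Un_from_on[OF S]]
      translate_gap_min_scale[OF a S b] card_less_multiplicity_sequence[OF S ms b]
      translate_gap_min_Arf[OF S Arf ms]
    unfolding N_def M_def by simp
  also have "min N (Min M) = Min (insert N M)"
    unfolding M_def by simp
  also have "int (Min (insert N M)) = Min (int ` insert N M)"
    unfolding M_def by (rule mono_Min_commute) (auto simp: mono_def)
  also have "int ` insert N M =
      {int (a * d i) + int i - 1 | i. i \<in> {1..<r}} \<union>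
      {int a + int r - 1, (int b - int (conductor S)) + int r}"
  proof -
    have "(\<lambda>i. int (a * d i + i - 1)) ` {1..<r} = {int (a * d i) + int i - 1 | i. i \<in> {1..<r}}"
      unfolding Setcompr_eq_image by (rule image_cong) auto
    moreover have "int (a + r - 1) = int a + int r - 1" "int N = (int b - int (conductor S)) + int r"
      using \<open>1 \<le> r\<close> b unfolding N_def by simp_all
    ultimately show ?thesis
      unfolding M_def image_insert image_Un image_image by auto
  qed
  finally show ?thesis .
qed

theorem corollary3p12:
  fixes \<Gamma> :: "nat set" and e' a b :: nat
  assumes "numerical_semigroup \<Gamma>" and "is_Arf \<Gamma>"
    and "e' \<in> \<Gamma>" and "e' \<noteq> 0"
    and "a \<ge> 2" and "b \<ge> conductor \<Gamma>"
  shows "FengRao2 (scale a (shiftsg \<Gamma> e') \<union> from_on (a * (b + e'))) =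
           min (int (a * e')) (FengRao2 (scale a \<Gamma> \<union> from_on (a * b)) + 1)
       \<and> (\<forall>r d. multiplicity_sequence \<Gamma> r d \<longrightarrow>
           FengRao2 (scale a \<Gamma> \<union> from_on (a * b)) =
             Min ({int (a * d i) + int i - 1 | i. i \<in> {1..<r}} \<union>
                  {int a + int r - 1, (int b - int (conductor \<Gamma>)) + int r}))"
  using FengRao2_scale_shiftsg[OF assms(1,3,4,5,6)] FengRao2_scale_Arf[OF assms(1,2) _ assms(5,6)]
  by blast

end
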